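(* Let $f\in H^{2s}(M)$ and $a,s>0$ satisfy $\|f\|\le a\|\Delta^sf\|$. Then for all $t\ge0$ and all $m=2^l$, $l=0,1,2,\dots$, such that $f\in H^{2(ms+t)}(M)$, $$\|\Delta^tf\|\le a^m\|\Delta^{ms+t}f\|.$$
   Context: $M$ is a compact orientable Riemannian manifold, $\Delta$ is its (nonnegative, self-adjoint) Laplace–Beltrami operator on $L_2(M)$, $\|\cdot\|$ is the $L_2(M)$-norm, powers $\Delta^t$, $t\ge0$, are defined by the spectral theorem, and $H^{s}(M)$ denotes the Sobolev space, equal to the domain of $\Delta^{s/2}$. *)

theory Defs
  imports "HOL-Analysis.Analysis"
begin

text \<open>Spectral model of the Laplace-Beltrami operator on a compact manifold:
  L2(M) has an orthonormal eigenbasis phi_k with eigenvalues lam k \<ge> 0.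
  A function f is represented by its coefficient sequence c (f = sum c_k phi_k).
  Powers Delta^t act by multiplication with lam k ^ t, with the convention
  Delta^0 = identity (so 0^0 = 1).\<close>

definition spow :: "real \<Rightarrow> real \<Rightarrow> real" where
  "spow x t = (if t = 0 then 1 else x powr t)"

text \<open>f belongs to the domain of Delta^t (i.e. to H^(2t)(M)).\<close>
definition in_dom :: "(nat \<Rightarrow> real) \<Rightarrow> (nat \<Rightarrow> complex) \<Rightarrow> real \<Rightarrow> bool" where
  "in_dom lam c t \<longleftrightarrow> summable (\<lambda>k. (spow (lam k) t)\<^sup>2 * (cmod (c k))\<^sup>2)"

definition lap_norm :: "(nat \<Rightarrow> real) \<Rightarrow> (nat \<Rightarrow> complex) \<Rightarrow> real \<Rightarrow> real" where
  "lap_norm lam c t = sqrt (\<Sum>k. (spow (lam k) t)\<^sup>2 * (cmod (c k))\<^sup>2)"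

end

theory Submission
  imports Defs
begin

text \<open>Write \<open>S\<^sub>r = \<Sum>\<^sub>k \<lambda>\<^sub>k\<^sup>2\<^sup>r |c\<^sub>k|\<^sup>2\<close>. The sequences \<open>\<lambda>\<^sub>k\<^sup>2\<^sup>s\<close> and \<open>\<lambda>\<^sub>k\<^sup>2\<^sup>u\<close> are similarly
  ordered, so Chebyshev's sum inequality for the weights \<open>|c\<^sub>k|\<^sup>2\<close> gives
  \<open>S\<^sub>s S\<^sub>u \<le> S\<^sub>0 S\<^sub>u\<^sub>+\<^sub>s\<close>. Together with \<open>S\<^sub>0 \<le> a\<^sup>2 S\<^sub>s\<close> this yields
  \<open>\<parallel>\<Delta>\<^sup>uf\<parallel> \<le> a \<parallel>\<Delta>\<^sup>u\<^sup>+\<^sup>sf\<parallel>\<close> for every \<open>u \<ge> 0\<close>; iterating this \<open>m\<close> times from \<open>u = t\<close>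
  gives the claim, for every \<open>m\<close> and not only for powers of two.\<close>

lemma chebyshev_suminf:
  fixes w x :: "nat \<Rightarrow> real" and g :: "real \<Rightarrow> real"
  assumes g: "mono_on {0..} g" and x: "\<And>k. 0 \<le> x k" and w: "\<And>k. 0 \<le> w k"
    and sw: "summable w" and sx: "summable (\<lambda>k. x k * w k)"
    and sg: "summable (\<lambda>k. g (x k) * w k)" and sxg: "summable (\<lambda>k. x k * g (x k) * w k)"
  shows "(\<Sum>k. x k * w k) * (\<Sum>k. g (x k) * w k) \<le> (\<Sum>k. w k) * (\<Sum>k. x k * g (x k) * w k)"
proof (cases "(\<Sum>k. w k) = 0")
  case True
  then have "w k = 0" for k
    using suminf_eq_zero_iff[OF sw] w by blast
  then show ?thesis by simp
next
  case False
  define S0 Sx Sg Sxg where "S0 = (\<Sum>k. w k)" and "Sx = (\<Sum>k. x k * w k)"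
    and "Sg = (\<Sum>k. g (x k) * w k)" and "Sxg = (\<Sum>k. x k * g (x k) * w k)"
  define m where "m = Sx / S0"
  have S0_pos: "S0 > 0"
    using False suminf_nonneg[OF sw w] unfolding S0_def by linarith
  have m_nonneg: "m \<ge> 0"
    unfolding m_def Sx_def using S0_pos sx x w by (simp add: suminf_nonneg)
  \<comment> \<open>the mean \<open>m\<close> of \<open>x\<close> is a pivot splitting both sequences consistently\<close>
  have pivot: "0 \<le> (x k - m) * (g (x k) - g m) * w k" for k
  proof -
    have "0 \<le> (x k - m) * (g (x k) - g m)"
      using mono_onD[OF g, of "x k" m] mono_onD[OF g, of m "x k"] x[of k] m_nonneg
      by (cases "x k \<le> m") (auto intro: mult_nonpos_nonpos)
    then show ?thesis using w by simp
  qed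
  have "(\<lambda>k. (x k - m) * (g (x k) - g m) * w k) sums (Sxg - m * Sg - g m * Sx + m * g m * S0)"
  proof -
    have "(\<lambda>k. x k * g (x k) * w k - m * (g (x k) * w k) - g m * (x k * w k) + m * g m * w k)
        sums (Sxg - m * Sg - g m * Sx + m * g m * S0)"
      unfolding S0_def Sx_def Sg_def Sxg_def
      by (intro sums_add sums_diff sums_mult summable_sums sw sx sg sxg)
    then show ?thesis by (simp add: algebra_simps)
  qed
  note deviation = this
  have "0 \<le> (\<Sum>k. (x k - m) * (g (x k) - g m) * w k)"
    using sums_summable[OF deviation] pivot by (rule suminf_nonneg)
  moreover have mean: "Sx = m * S0" unfolding m_def using S0_pos by simp
  ultimately have "m * Sg \<le> Sxg"
    using sums_unique[OF deviation] by (simp add: algebra_simps)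
  then have "S0 * (m * Sg) \<le> S0 * Sxg" using S0_pos by simp
  then have "Sx * Sg \<le> S0 * Sxg" unfolding mean by (simp add: algebra_simps)
  then show ?thesis unfolding S0_def Sx_def Sg_def Sxg_def .
qed

lemma spow_nonneg: "0 \<le> spow x t"
  by (simp add: spow_def)

lemma spow_add:
  assumes "0 \<le> u" "0 \<le> v"
  shows "spow x (u + v) = spow x u * spow x v"
  using assms by (auto simp: spow_def powr_add)

lemma powr_square: "((x::real) powr r)\<^sup>2 = x powr (2 * r)"
  unfolding power2_eq_square by (metis mult_2 powr_add)

lemma spow_square_powr:
  assumes "0 < u" "0 < s"
  shows "(spow x u)\<^sup>2 = ((spow x s)\<^sup>2) powr (u / s)"
  using assms by (simp add: spow_def powr_square powr_powr)

lemma spow_square_le: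
  assumes x: "0 \<le> x" and u: "0 \<le> u" "u \<le> v"
  shows "(spow x u)\<^sup>2 \<le> 1 + (spow x v)\<^sup>2"
proof (cases "u = 0")
  case True
  then show ?thesis by (simp add: spow_def)
next
  case False
  have "spow x u \<le> 1 \<or> spow x u \<le> spow x v"
  proof (cases "1 \<le> x")
    case True
    then have "x powr u \<le> x powr v" using u by (simp add: powr_mono)
    then show ?thesis using False u by (simp add: spow_def)
  next
    case False
    then have "x powr u \<le> 1" using x u \<open>u \<noteq> 0\<close> by (intro powr_le1) auto
    then show ?thesis using \<open>u \<noteq> 0\<close> by (simp add: spow_def)
  qed
  then show ?thesis
  proof
    assume "spow x u \<le> 1"
    then have "(spow x u)\<^sup>2 \<le> 1" by (simp add: power_le_one spow_nonneg)
    then show ?thesis using zero_le_power2[of "spow x v"] by linarith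
  next
    assume "spow x u \<le> spow x v"
    then have "(spow x u)\<^sup>2 \<le> (spow x v)\<^sup>2" by (simp add: power_mono spow_nonneg)
    then show ?thesis by linarith
  qed
qed

lemma in_dom_interpolate:
  assumes lam: "\<forall>k. 0 \<le> lam k" and "in_dom lam c 0" and "in_dom lam c v"
    and "0 \<le> u" "u \<le> v"
  shows "in_dom lam c u"
  unfolding in_dom_def
proof (rule summable_comparison_test)
  show "summable (\<lambda>k. (spow (lam k) 0)\<^sup>2 * (cmod (c k))\<^sup>2 + (spow (lam k) v)\<^sup>2 * (cmod (c k))\<^sup>2)"
    using assms unfolding in_dom_def by (intro summable_add)
  have "(spow (lam k) u)\<^sup>2 * (cmod (c k))\<^sup>2 \<le> (1 + (spow (lam k) v)\<^sup>2) * (cmod (c k))\<^sup>2" for k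
    using spow_square_le[of "lam k" u v] assms by (simp add: mult_right_mono)
  then show "\<exists>N. \<forall>k\<ge>N. norm ((spow (lam k) u)\<^sup>2 * (cmod (c k))\<^sup>2)
      \<le> (spow (lam k) 0)\<^sup>2 * (cmod (c k))\<^sup>2 + (spow (lam k) v)\<^sup>2 * (cmod (c k))\<^sup>2"
    by (simp add: spow_def algebra_simps)
qed

lemma lap_norm_le_iff_square:
  assumes "0 \<le> a"
  shows "lap_norm lam c u \<le> a * lap_norm lam c v
    \<longleftrightarrow> (\<Sum>k. (spow (lam k) u)\<^sup>2 * (cmod (c k))\<^sup>2) \<le> a\<^sup>2 * (\<Sum>k. (spow (lam k) v)\<^sup>2 * (cmod (c k))\<^sup>2)"
proof -
  have "a * sqrt (\<Sum>k. (spow (lam k) v)\<^sup>2 * (cmod (c k))\<^sup>2)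
      = sqrt (a\<^sup>2 * (\<Sum>k. (spow (lam k) v)\<^sup>2 * (cmod (c k))\<^sup>2))"
    using assms by (simp add: real_sqrt_mult)
  then show ?thesis
    unfolding lap_norm_def by (simp only: real_sqrt_le_iff)
qed

lemma lap_norm_shift_le:
  assumes lam: "\<forall>k. 0 \<le> lam k" and L2: "in_dom lam c 0" and Hs: "in_dom lam c s"
    and a: "0 \<le> a" and s: "0 < s"
    and hyp: "lap_norm lam c 0 \<le> a * lap_norm lam c s"
    and u: "0 \<le> u" and Hus: "in_dom lam c (u + s)"
  shows "lap_norm lam c u \<le> a * lap_norm lam c (u + s)"
proof (cases "u = 0")
  case True
  then show ?thesis using hyp by simp
next
  case False
  define w where "w k = (cmod (c k))\<^sup>2" for k
  define x where "x k = (spow (lam k) s)\<^sup>2" for k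
  define g where "g y = y powr (u / s)" for y :: real
  have Hu: "in_dom lam c u"
    using in_dom_interpolate[OF lam L2 Hus] u s by simp
  have spow_u: "(spow (lam k) u)\<^sup>2 = g (x k)" for k
    unfolding g_def x_def using False u s by (intro spow_square_powr) auto
  have spow_us: "(spow (lam k) (u + s))\<^sup>2 = x k * g (x k)" for k
    using spow_u[of k] u s by (simp add: x_def spow_add power_mult_distrib)
  have zero: "(spow (lam k) 0)\<^sup>2 = 1" for k by (simp add: spow_def)
  define S0 Ss Su Sus where "S0 = (\<Sum>k. w k)" and "Ss = (\<Sum>k. x k * w k)"
    and "Su = (\<Sum>k. g (x k) * w k)" and "Sus = (\<Sum>k. x k * g (x k) * w k)"
  have sw: "summable w"
    using L2 unfolding in_dom_def w_def zero by simp
  have sx: "summable (\<lambda>k. x k * w k)"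
    using Hs unfolding in_dom_def w_def x_def .
  have su: "summable (\<lambda>k. g (x k) * w k)"
    using Hu unfolding in_dom_def w_def spow_u .
  have sus: "summable (\<lambda>k. x k * g (x k) * w k)"
    using Hus unfolding in_dom_def w_def spow_us .
  have w: "0 \<le> w k" and x: "0 \<le> x k" and g_nonneg: "0 \<le> g y" for k y
    by (simp_all add: w_def x_def g_def)
  have g: "mono_on {0..} g"
    unfolding g_def using False u s by (auto intro!: mono_onI powr_mono2)
  have cheb: "Ss * Su \<le> S0 * Sus"
    unfolding S0_def Ss_def Su_def Sus_def by (rule chebyshev_suminf[OF g x w sw sx su sus])
  have "S0 \<le> a\<^sup>2 * Ss"
    using hyp unfolding lap_norm_le_iff_square[OF a] S0_def Ss_def w_def x_def zero by simp
  have "Su \<le> a\<^sup>2 * Sus"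
  proof (cases "S0 = 0")
    case True
    then have "w k = 0" for k
      using suminf_eq_zero_iff[OF sw] w unfolding S0_def by blast
    then show ?thesis by (simp add: Su_def Sus_def)
  next
    case False
    have "0 \<le> Su" unfolding Su_def by (rule suminf_nonneg[OF su]) (simp add: g_nonneg w)
    then have "S0 * Su \<le> a\<^sup>2 * Ss * Su"
      using \<open>S0 \<le> a\<^sup>2 * Ss\<close> by (simp add: mult_right_mono)
    also have "\<dots> = a\<^sup>2 * (Ss * Su)" by simp
    also have "\<dots> \<le> a\<^sup>2 * (S0 * Sus)"
      using cheb by (simp add: mult_left_mono)
    also have "\<dots> = S0 * (a\<^sup>2 * Sus)" by simp
    finally have "S0 * Su \<le> S0 * (a\<^sup>2 * Sus)" .
    moreover have "0 < S0"
      using False suminf_nonneg[OF sw w] unfolding S0_def by simp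
    ultimately show ?thesis by simp
  qed
  then show ?thesis
    unfolding lap_norm_le_iff_square[OF a] Su_def Sus_def w_def spow_u spow_us .
qed

lemma lap_norm_iterate_le:
  assumes lam: "\<forall>k. 0 \<le> lam k" and L2: "in_dom lam c 0" and Hs: "in_dom lam c s"
    and a: "0 \<le> a" and s: "0 < s"
    and hyp: "lap_norm lam c 0 \<le> a * lap_norm lam c s"
    and t: "0 \<le> t" and Hm: "in_dom lam c (real m * s + t)"
  shows "lap_norm lam c t \<le> a ^ m * lap_norm lam c (real m * s + t)"
  using Hm
proof (induction m)
  case 0
  then show ?case by simp
next
  case (Suc m)
  have "in_dom lam c (real m * s + t)"
    using in_dom_interpolate[OF lam L2 Suc.prems] s t by simp
  then have "lap_norm lam c t \<le> a ^ m * lap_norm lam c (real m * s + t)"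
    by (rule Suc.IH)
  also have "\<dots> \<le> a ^ m * (a * lap_norm lam c (real (Suc m) * s + t))"
  proof -
    have shift: "real m * s + t + s = real (Suc m) * s + t" by (simp add: algebra_simps)
    have "lap_norm lam c (real m * s + t) \<le> a * lap_norm lam c (real (Suc m) * s + t)"
      using lap_norm_shift_le[OF lam L2 Hs a s hyp, of "real m * s + t"] Suc.prems s t
      unfolding shift by simp
    then show ?thesis using a by (simp add: mult_left_mono)
  qed
  finally show ?case by (simp add: ac_simps)
qed

theorem lemma1p6:
  fixes lam :: "nat \<Rightarrow> real" and c :: "nat \<Rightarrow> complex"
    and a s t :: real and l :: nat
  assumes lam_nonneg: "\<forall>k. lam k \<ge> 0"
    and L2: "in_dom lam c 0"
    and H2s: "in_dom lam c s"
    and a_pos: "a > 0" and s_pos: "s > 0"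
    and hyp: "lap_norm lam c 0 \<le> a * lap_norm lam c s"
    and t_nonneg: "t \<ge> 0"
    and Hm: "in_dom lam c (real (2 ^ l) * s + t)"
  shows "lap_norm lam c t \<le> a ^ (2 ^ l) * lap_norm lam c (real (2 ^ l) * s + t)"
  using lap_norm_iterate_le[OF lam_nonneg L2 H2s _ s_pos hyp t_nonneg Hm] a_pos by simp

end
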